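(* Let $w\in W$. Then (a) $\langle w\cdot 0,\alpha_0^\vee\rangle\geq -2(h-1)$; and (b) $\langle w\cdot 0,\alpha^\vee\rangle\leq h-2$ for every simple root $\alpha\in S$.
   Context: $R$ is an irreducible root system with positive roots $R^+$, simple roots $S$, Weyl group $W$; the inner product is normalized so that short roots $\alpha$ satisfy $\langle\alpha,\alpha\rangle=2$, and $\alpha^\vee=2\alpha/\langle\alpha,\alpha\rangle$. $\rho$ is half the sum of the positive roots, $\alpha_0$ is the highest short root, $h=\langle\rho,\alpha_0^\vee\rangle+1$ is the Coxeter number, and the dot action is $w\cdot\lambda=w(\lambda+\rho)-\rho$. *)

theory Defs
  imports "HOL-Analysis.Analysis"
begin

definition coroot :: "'a::real_inner \<Rightarrow> 'a" where
  "coroot a = (2 / (a \<bullet> a)) *\<^sub>R a"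

definition refl :: "'a::real_inner \<Rightarrow> 'a \<Rightarrow> 'a" where
  "refl a v = v - (v \<bullet> coroot a) *\<^sub>R a"

definition root_system :: "'a::euclidean_space set \<Rightarrow> bool" where
  "root_system R \<longleftrightarrow> finite R \<and> 0 \<notin> R \<and> span R = UNIV \<and>
     (\<forall>a\<in>R. \<forall>b\<in>R. refl a b \<in> R) \<and>
     (\<forall>a\<in>R. \<forall>b\<in>R. b \<bullet> coroot a \<in> \<int>) \<and>
     (\<forall>a\<in>R. \<forall>c::real. c *\<^sub>R a \<in> R \<longrightarrow> c = 1 \<or> c = -1)"

definition irreducible_root_system :: "'a::euclidean_space set \<Rightarrow> bool" where
  "irreducible_root_system R \<longleftrightarrow> root_system R \<and>
     \<not> (\<exists>A. A \<subseteq> R \<and> A \<noteq> {} \<and> A \<noteq> R \<and> (\<forall>a\<in>A. \<forall>b\<in>R - A. a \<bullet> b = 0))"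

definition nonneg_int_comb :: "'a::real_vector set \<Rightarrow> 'a \<Rightarrow> bool" where
  "nonneg_int_comb S v \<longleftrightarrow>
     (\<exists>c. (\<forall>s\<in>S. c s \<in> \<int> \<and> c s \<ge> 0) \<and> v = (\<Sum>s\<in>S. c s *\<^sub>R s))"

definition simple_roots :: "'a::euclidean_space set \<Rightarrow> 'a set \<Rightarrow> bool" where
  "simple_roots R S \<longleftrightarrow> S \<subseteq> R \<and> independent S \<and>
     (\<forall>a\<in>R. nonneg_int_comb S a \<or> nonneg_int_comb S (- a))"

definition pos_roots :: "'a::euclidean_space set \<Rightarrow> 'a set \<Rightarrow> 'a set" where
  "pos_roots R S = {a \<in> R. nonneg_int_comb S a}"

definition rho :: "'a::euclidean_space set \<Rightarrow> 'a set \<Rightarrow> 'a" where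
  "rho R S = (1/2) *\<^sub>R (\<Sum>a\<in>pos_roots R S. a)"

definition short_root :: "'a::euclidean_space set \<Rightarrow> 'a \<Rightarrow> bool" where
  "short_root R a \<longleftrightarrow> a \<in> R \<and> (\<forall>b\<in>R. a \<bullet> a \<le> b \<bullet> b)"

definition normalized_roots :: "'a::euclidean_space set \<Rightarrow> bool" where
  "normalized_roots R \<longleftrightarrow> (\<forall>a. short_root R a \<longrightarrow> a \<bullet> a = 2)"

definition highest_short_root :: "'a::euclidean_space set \<Rightarrow> 'a set \<Rightarrow> 'a \<Rightarrow> bool" where
  "highest_short_root R S a0 \<longleftrightarrow> short_root R a0 \<and>
     (\<forall>b. short_root R b \<longrightarrow> nonneg_int_comb S (a0 - b))"

inductive_set weyl_group :: "'a::euclidean_space set \<Rightarrow> ('a \<Rightarrow> 'a) set" for R where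
  weyl_id: "id \<in> weyl_group R"
| weyl_step: "w \<in> weyl_group R \<Longrightarrow> a \<in> R \<Longrightarrow> refl a \<circ> w \<in> weyl_group R"

definition coxeter_number :: "'a::euclidean_space set \<Rightarrow> 'a set \<Rightarrow> 'a \<Rightarrow> real" where
  "coxeter_number R S a0 = rho R S \<bullet> coroot a0 + 1"

definition dot_action :: "'a::euclidean_space set \<Rightarrow> 'a set \<Rightarrow> ('a \<Rightarrow> 'a) \<Rightarrow> 'a \<Rightarrow> 'a" where
  "dot_action R S w lam = w (lam + rho R S) - rho R S"

end

theory Submission imports Defs begin

text \<open>
  Since \<open>w \<cdot> 0 = w \<rho> - \<rho>\<close> and \<open>w\<close> is orthogonal and permutes the roots, both bounds reduce to
  bounds on \<open>\<langle>\<rho>, \<beta>\<^sup>\<or>\<rangle>\<close> over all roots \<open>\<beta>\<close>: for (a) one needs \<open>\<langle>\<rho>, \<gamma>\<rangle> \<ge> -\<langle>\<rho>, \<alpha>\<^sub>0\<rangle>\<close> for short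
  \<open>\<gamma>\<close>, and for (b), using \<open>\<langle>\<rho>, \<alpha>\<^sup>\<or>\<rangle> = 1\<close> for simple \<open>\<alpha>\<close>, one needs \<open>\<langle>\<rho>, \<beta>\<^sup>\<or>\<rangle> \<le> \<langle>\<rho>, \<alpha>\<^sub>0\<rangle> = h - 1\<close>.
  For short roots this is the defining property of \<open>\<alpha>\<^sub>0\<close>, because \<open>\<rho>\<close> is positive on simple roots.
  A long root \<open>\<beta>\<close> is, by irreducibility, not orthogonal to some short root \<open>\<gamma>\<close>; then
  \<open>m = \<langle>\<beta>, \<gamma>\<rangle>\<close> is an integer with \<open>|m| \<ge> 2\<close>, and
  \<open>m \<langle>\<rho>, \<beta>\<^sup>\<or>\<rangle> = \<langle>\<rho>, \<gamma>\<rangle> - \<langle>\<rho>, s\<^sub>\<beta> \<gamma>\<rangle>\<close> is a difference of two values at short roots.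
\<close>

lemma inner_coroot: "x \<bullet> coroot a = 2 * (x \<bullet> a) / (a \<bullet> a)"
  by (simp add: coroot_def)

lemma inner_coroot_self:
  fixes a :: "'a::real_inner"
  assumes "a \<noteq> 0" shows "a \<bullet> coroot a = 2"
  using assms by (simp add: coroot_def)

lemma refl_inner_refl:
  fixes a :: "'a::real_inner"
  assumes "a \<noteq> 0" shows "refl a x \<bullet> refl a y = x \<bullet> y"
  using assms
  by (simp add: refl_def coroot_def inner_diff_left inner_diff_right inner_commute field_simps)

lemma refl_inner_coroot:
  fixes a :: "'a::real_inner"
  assumes "a \<noteq> 0" shows "refl a v \<bullet> coroot a = - (v \<bullet> coroot a)"
  using assms by (simp add: refl_def coroot_def inner_diff_left field_simps)

lemma refl_refl:
  fixes a :: "'a::real_inner"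
  assumes "a \<noteq> 0" shows "refl a (refl a v) = v"
  using refl_inner_coroot[OF assms, of v] by (simp add: refl_def)

lemma refl_self:
  fixes a :: "'a::real_inner"
  assumes "a \<noteq> 0" shows "refl a a = - a"
  using assms by (simp add: refl_def inner_coroot_self scaleR_2)

lemma weyl_group_inner:
  assumes "0 \<notin> R" "w \<in> weyl_group R"
  shows "w x \<bullet> w y = x \<bullet> y"
  using assms(2)
proof induction
  case (weyl_step w a)
  then show ?case using assms(1) refl_inner_refl[of a "w x" "w y"] by auto
qed simp

lemma weyl_group_maps_roots:
  assumes "\<forall>a\<in>R. \<forall>b\<in>R. refl a b \<in> R" "w \<in> weyl_group R" "b \<in> R"
  shows "w b \<in> R"
  using assms(2) by induction (simp_all add: assms(1,3))

lemma weyl_group_inner_coroot: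
  assumes "0 \<notin> R" "w \<in> weyl_group R"
  shows "w x \<bullet> coroot (w y) = x \<bullet> coroot y"
  using weyl_group_inner[OF assms] by (simp add: coroot_def)

lemma sum_indicator_scaleR:
  fixes S :: "'a::real_vector set"
  assumes "finite S" "t \<in> S"
  shows "(\<Sum>s\<in>S. (if s = t then n else 0) *\<^sub>R s) = n *\<^sub>R t"
  using assms by (simp add: if_distrib[of "\<lambda>c. c *\<^sub>R _"] cong: if_cong)

lemma independent_coeff_unique:
  fixes S :: "'a::euclidean_space set"
  assumes "independent S" "(\<Sum>s\<in>S. c s *\<^sub>R s) = (\<Sum>s\<in>S. d s *\<^sub>R s)" "t \<in> S"
  shows "c t = d t"
proof -
  have "(\<Sum>s\<in>S. (c s - d s) *\<^sub>R s) = 0"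
    using assms(2) by (simp add: scaleR_diff_left sum_subtractf)
  then show ?thesis using assms(1,3) unfolding independent_explicit by fastforce
qed

lemma not_nonneg_int_comb_uminus:
  fixes S :: "'a::euclidean_space set"
  assumes "independent S" "t \<in> S" "c t > 0"
  shows "\<not> nonneg_int_comb S (- (\<Sum>s\<in>S. c s *\<^sub>R s))"
proof
  assume "nonneg_int_comb S (- (\<Sum>s\<in>S. c s *\<^sub>R s))"
  then obtain d where d: "\<forall>s\<in>S. d s \<ge> 0" "- (\<Sum>s\<in>S. c s *\<^sub>R s) = (\<Sum>s\<in>S. d s *\<^sub>R s)"
    unfolding nonneg_int_comb_def by auto
  have "(\<Sum>s\<in>S. c s *\<^sub>R s) = (\<Sum>s\<in>S. (- d s) *\<^sub>R s)"
    using d(2) by (simp add: sum_negf) (metis minus_minus)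
  from independent_coeff_unique[OF assms(1) this assms(2)] have "c t = - d t" by simp
  then show False using assms(2,3) d(1) by force
qed

locale root_sys =
  fixes R :: "'a::euclidean_space set"
  assumes root_system: "root_system R"
begin

lemma finite_roots: "finite R"
  and root_nonzero: "a \<in> R \<Longrightarrow> a \<noteq> 0"
  and refl_root: "a \<in> R \<Longrightarrow> b \<in> R \<Longrightarrow> refl a b \<in> R"
  and inner_coroot_Ints: "a \<in> R \<Longrightarrow> b \<in> R \<Longrightarrow> b \<bullet> coroot a \<in> \<int>"
  and root_multiple: "a \<in> R \<Longrightarrow> c *\<^sub>R a \<in> R \<Longrightarrow> c = 1 \<or> c = -1"
  using root_system unfolding root_system_def by auto

lemma uminus_root: "a \<in> R \<Longrightarrow> - a \<in> R"
  using refl_root[of a a] refl_self[OF root_nonzero] by auto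

lemma roots_nonempty: "R \<noteq> {}"
proof
  assume "R = {}"
  then have "(UNIV :: 'a set) = {0}"
    using root_system unfolding root_system_def by simp
  moreover obtain b :: 'a where "b \<in> Basis" using nonempty_Basis by blast
  ultimately show False by (metis UNIV_I singletonD zero_not_in_Basis)
qed

lemma weyl_group_image_roots:
  assumes "w \<in> weyl_group R" shows "w ` R = R"
proof (rule endo_inj_surj)
  have "0 \<notin> R" using root_nonzero by blast
  note inner_w = weyl_group_inner[OF this assms]
  show "inj_on w R"
  proof
    fix x y assume "w x = w y"
    then have "x \<bullet> x = y \<bullet> y" "x \<bullet> y = y \<bullet> y"
      using inner_w[of x x] inner_w[of x y] inner_w[of y y] by simp_all
    then have "(x - y) \<bullet> (x - y) = 0"
      by (simp add: inner_diff_left inner_diff_right inner_commute)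
    then show "x = y" by simp
  qed
  show "w ` R \<subseteq> R"
    using weyl_group_maps_roots[OF _ assms] refl_root by blast
qed (rule finite_roots)

end

locale normalized_root_sys = root_sys +
  assumes normalized: "normalized_roots R"
begin

lemma short_root_exists: "\<exists>g. short_root R g"
proof -
  have "Min ((\<lambda>b. b \<bullet> b) ` R) \<in> (\<lambda>b. b \<bullet> b) ` R"
    using finite_roots roots_nonempty by simp
  then obtain g where "g \<in> R" "g \<bullet> g = Min ((\<lambda>b. b \<bullet> b) ` R)" by auto
  then show ?thesis
    using finite_roots unfolding short_root_def by auto
qed

lemma root_inner_self_ge: "b \<in> R \<Longrightarrow> b \<bullet> b \<ge> 2"
  using short_root_exists normalized unfolding short_root_def normalized_roots_def by metis

lemma short_root_iff: "short_root R g \<longleftrightarrow> g \<in> R \<and> g \<bullet> g = 2"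
  using root_inner_self_ge normalized unfolding short_root_def normalized_roots_def by fastforce

lemma coroot_short_root: "short_root R g \<Longrightarrow> coroot g = g"
  by (simp add: short_root_iff coroot_def)

lemma short_root_refl: "a \<in> R \<Longrightarrow> short_root R g \<Longrightarrow> short_root R (refl a g)"
  by (simp add: short_root_iff refl_root refl_inner_refl root_nonzero)

lemma long_root_not_orthogonal_short:
  assumes "irreducible_root_system R" and b: "b \<in> R" "\<not> short_root R b"
  shows "\<exists>g. short_root R g \<and> b \<bullet> g \<noteq> 0"
proof (rule ccontr)
  assume no_short: "\<not> ?thesis"
  define L where "L = {c \<in> R. \<not> short_root R c \<and> (\<forall>g. short_root R g \<longrightarrow> c \<bullet> g = 0)}"
  have orth: "a \<bullet> c = 0" if a: "a \<in> L" and c: "c \<in> R - L" for a c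
  proof (cases "short_root R c")
    case True then show ?thesis using a unfolding L_def by auto
  next
    case False
    then obtain g where g: "short_root R g" "c \<bullet> g \<noteq> 0" using c unfolding L_def by auto
    have "a \<bullet> g = 0" "a \<bullet> refl c g = 0"
      using a g(1) short_root_refl[of c g] c unfolding L_def by auto
    moreover have "g \<bullet> coroot c \<noteq> 0"
      using g(2) root_nonzero c by (simp add: inner_coroot inner_commute)
    ultimately show ?thesis by (simp add: refl_def inner_diff_right)
  qed
  have "L \<subseteq> R" "b \<in> L" "L \<noteq> R"
    using no_short b short_root_exists short_root_iff unfolding L_def by auto
  then show False
    using assms(1) orth unfolding irreducible_root_system_def by blast
qed

lemma inner_long_short_abs_ge:
  assumes b: "b \<in> R" "\<not> short_root R b" and g: "short_root R g" "b \<bullet> g \<noteq> 0"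
  shows "\<bar>b \<bullet> g\<bar> \<ge> 2"
proof -
  have gR: "g \<in> R" using g(1) short_root_iff by blast
  have bb: "b \<bullet> b > 2" using b root_inner_self_ge short_root_iff by fastforce
  obtain m :: int where m: "b \<bullet> g = m"
    using inner_coroot_Ints[OF gR b(1)] coroot_short_root[OF g(1)] Ints_cases by metis
  obtain n :: int where n: "g \<bullet> coroot b = n"
    using inner_coroot_Ints[OF b(1) gR] Ints_cases by metis
  have "of_int n = 2 * of_int m / (b \<bullet> b)"
    using m n by (simp add: inner_coroot inner_commute)
  then have eq: "\<bar>of_int m\<bar> = \<bar>of_int n\<bar> * (b \<bullet> b) / 2" and "n \<noteq> 0"
    using bb g(2) m by (auto simp: field_simps abs_mult)
  then have "of_int \<bar>n\<bar> \<ge> (1::real)" by simp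
  then have "\<bar>of_int n\<bar> * (b \<bullet> b) \<ge> b \<bullet> b"
    using bb by (simp add: mult_le_cancel_right1)
  then have "\<bar>m\<bar> > 1"
    using eq bb by (simp add: del: of_int_abs flip: of_int_abs)
  then show ?thesis using m by (simp del: of_int_abs flip: of_int_abs)
qed

end

locale based_root_sys = root_sys +
  fixes S :: "'a::euclidean_space set"
  assumes simple_roots: "simple_roots R S"
begin

lemma simple_root_in: "S \<subseteq> R"
  and independent_simple: "independent S"
  and root_pos_or_neg: "a \<in> R \<Longrightarrow> nonneg_int_comb S a \<or> nonneg_int_comb S (- a)"
  using simple_roots unfolding simple_roots_def by auto

lemma finite_simple: "finite S"
  using independent_simple finiteI_independent by auto

lemma simple_root_pos:
  assumes "al \<in> S" shows "al \<in> pos_roots R S"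
  using assms simple_root_in sum_indicator_scaleR[OF finite_simple assms, of 1]
  unfolding pos_roots_def nonneg_int_comb_def
  by (intro CollectI conjI exI[of _ "\<lambda>s. if s = al then 1 else 0"]) auto

lemma pos_root_coeff_other_simple:
  assumes al: "al \<in> S" and b: "b \<in> R" "b \<noteq> al" "b = (\<Sum>s\<in>S. c s *\<^sub>R s)"
    and c: "\<forall>s\<in>S. c s \<ge> 0"
  shows "\<exists>t\<in>S. t \<noteq> al \<and> c t > 0"
proof (rule ccontr)
  assume "\<not> ?thesis"
  then have "\<forall>s\<in>S. s \<noteq> al \<longrightarrow> c s = 0" using c by force
  then have "b = (\<Sum>s\<in>S. (if s = al then c al else 0) *\<^sub>R s)"
    using b(3) by (auto intro: sum.cong)
  then have "b = c al *\<^sub>R al" using sum_indicator_scaleR[OF finite_simple al] by simp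
  moreover have "c al \<ge> 0" using c al by blast
  ultimately have "b = al"
    using root_multiple[of al "c al"] al b(1) simple_root_in by force
  then show False using b(2) by simp
qed

lemma refl_simple_pos_root:
  assumes al: "al \<in> S" and b: "b \<in> pos_roots R S" "b \<noteq> al"
  shows "refl al b \<in> pos_roots R S - {al}"
proof -
  have alR: "al \<in> R" using al simple_root_in by blast
  obtain c where c: "\<forall>s\<in>S. c s \<in> \<int> \<and> c s \<ge> 0" and bc: "b = (\<Sum>s\<in>S. c s *\<^sub>R s)"
    using b(1) unfolding pos_roots_def nonneg_int_comb_def by auto
  obtain t where t: "t \<in> S" "t \<noteq> al" "c t > 0"
    using pos_root_coeff_other_simple[OF al _ b(2) bc] b(1) c unfolding pos_roots_def by auto
  define n where "n = b \<bullet> coroot al"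
  have "refl al b = (\<Sum>s\<in>S. (c s - (if s = al then n else 0)) *\<^sub>R s)"
    by (simp add: refl_def n_def scaleR_diff_left sum_subtractf bc[symmetric]
        sum_indicator_scaleR[OF finite_simple al])
  then have "\<not> nonneg_int_comb S (- refl al b)"
    using not_nonneg_int_comb_uminus[OF independent_simple t(1),
        of "\<lambda>s. c s - (if s = al then n else 0)"] t by simp
  moreover have "refl al b \<in> R" using refl_root[OF alR] b(1) unfolding pos_roots_def by blast
  ultimately have "refl al b \<in> pos_roots R S"
    using root_pos_or_neg unfolding pos_roots_def by blast
  moreover have "refl al b \<noteq> al"
  proof
    assume "refl al b = al"
    then have "b = - al"
      using refl_refl[OF root_nonzero[OF alR], of b] refl_self[OF root_nonzero[OF alR]] by simp
    then have "nonneg_int_comb S (- al)"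
      using b(1) unfolding pos_roots_def by simp
    then show False
      using not_nonneg_int_comb_uminus[OF independent_simple al, of "\<lambda>s. if s = al then 1 else 0"]
      by (simp add: sum_indicator_scaleR[OF finite_simple al])
  qed
  ultimately show ?thesis by blast
qed

text \<open>The reflection \<open>s\<^sub>\<alpha>\<close> permutes the positive roots other than \<open>\<alpha>\<close> and negates \<open>\<langle>-, \<alpha>\<^sup>\<or>\<rangle>\<close>,
  so only \<open>\<alpha>\<close> itself contributes to \<open>\<langle>2\<rho>, \<alpha>\<^sup>\<or>\<rangle>\<close>.\<close>

lemma rho_inner_coroot_simple:
  assumes al: "al \<in> S" shows "rho R S \<bullet> coroot al = 1"
proof -
  have al0: "al \<noteq> 0" using al simple_root_in root_nonzero by blast
  define P' where "P' = pos_roots R S - {al}"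
  define f where "f = (\<lambda>b. b \<bullet> coroot al)"
  have "finite (pos_roots R S)" using finite_roots unfolding pos_roots_def by simp
  have "refl al b \<in> P'" if "b \<in> P'" for b
    using refl_simple_pos_root[OF al] that unfolding P'_def by blast
  then have "sum f P' = sum (\<lambda>b. - f b) P'"
    by (intro sum.reindex_bij_witness[of _ "refl al" "refl al"])
      (simp_all add: refl_refl[OF al0] f_def refl_inner_coroot[OF al0])
  also have "\<dots> = - sum f P'"
    by (simp add: sum_negf)
  finally have "sum f P' = 0" by simp
  then have "sum f (pos_roots R S) = 2"
    using sum.remove[OF \<open>finite (pos_roots R S)\<close> simple_root_pos[OF al], of f]
    by (simp add: P'_def f_def inner_coroot_self[OF al0])
  then show ?thesis by (simp add: rho_def f_def inner_sum_left)
qed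

lemma rho_inner_nonneg_int_comb:
  assumes "nonneg_int_comb S x" shows "rho R S \<bullet> x \<ge> 0"
proof -
  obtain c where c: "\<forall>s\<in>S. c s \<ge> 0" "x = (\<Sum>s\<in>S. c s *\<^sub>R s)"
    using assms unfolding nonneg_int_comb_def by auto
  have "rho R S \<bullet> s > 0" if s: "s \<in> S" for s
  proof -
    have "s \<bullet> s > 0" using s simple_root_in root_nonzero by auto
    moreover have "rho R S \<bullet> s = (s \<bullet> s) / 2"
      using rho_inner_coroot_simple[OF s] calculation by (simp add: inner_coroot field_simps)
    ultimately show ?thesis by linarith
  qed
  then show ?thesis
    using c by (auto simp: inner_sum_right less_imp_le intro!: sum_nonneg)
qed

end

locale normalized_based_root_sys = based_root_sys + normalized_root_sys
begin

lemma rho_inner_short_root_abs_le: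
  assumes a0: "highest_short_root R S a0" and g: "short_root R g"
  shows "\<bar>rho R S \<bullet> g\<bar> \<le> rho R S \<bullet> a0"
proof -
  have "short_root R (- g)"
    using g uminus_root by (simp add: short_root_iff)
  then have "rho R S \<bullet> (a0 - g) \<ge> 0" "rho R S \<bullet> (a0 - - g) \<ge> 0"
    using a0 g rho_inner_nonneg_int_comb unfolding highest_short_root_def by blast+
  then show ?thesis by (simp add: inner_diff_right inner_add_right abs_le_iff)
qed

lemma rho_inner_coroot_le:
  assumes "irreducible_root_system R" "highest_short_root R S a0" and b: "b \<in> R"
  shows "rho R S \<bullet> coroot b \<le> rho R S \<bullet> a0"
proof (cases "short_root R b")
  case True then show ?thesis
    using rho_inner_short_root_abs_le[OF assms(2)] coroot_short_root by fastforce
next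
  case False
  obtain g where g: "short_root R g" "b \<bullet> g \<noteq> 0"
    using long_root_not_orthogonal_short[OF assms(1) b False] by blast
  have bb: "b \<bullet> b > 0" using b root_nonzero by simp
  have "(b \<bullet> g) * (rho R S \<bullet> coroot b) = rho R S \<bullet> g - rho R S \<bullet> refl b g"
    using bb by (simp add: refl_def inner_diff_right inner_coroot inner_commute[of g b] field_simps)
  then have "\<bar>b \<bullet> g\<bar> * \<bar>rho R S \<bullet> coroot b\<bar> = \<bar>rho R S \<bullet> g - rho R S \<bullet> refl b g\<bar>"
    by (metis abs_mult)
  also have "\<dots> \<le> 2 * (rho R S \<bullet> a0)"
    using rho_inner_short_root_abs_le[OF assms(2) g(1)]
      rho_inner_short_root_abs_le[OF assms(2) short_root_refl[OF b g(1)]] by arith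
  finally have "\<bar>b \<bullet> g\<bar> * \<bar>rho R S \<bullet> coroot b\<bar> \<le> 2 * (rho R S \<bullet> a0)" .
  moreover have "2 * \<bar>rho R S \<bullet> coroot b\<bar> \<le> \<bar>b \<bullet> g\<bar> * \<bar>rho R S \<bullet> coroot b\<bar>"
    using inner_long_short_abs_ge[OF b False g] by (simp add: mult_right_mono)
  ultimately show ?thesis by linarith
qed

end

theorem proposition2p2p2:
  fixes R S :: "'a::euclidean_space set" and a0 :: 'a and w :: "'a \<Rightarrow> 'a"
  assumes "irreducible_root_system R"
    and "simple_roots R S"
    and "normalized_roots R"
    and "highest_short_root R S a0"
    and "w \<in> weyl_group R"
  shows "dot_action R S w 0 \<bullet> coroot a0 \<ge> - 2 * (coxeter_number R S a0 - 1)
     \<and> (\<forall>a\<in>S. dot_action R S w 0 \<bullet> coroot a \<le> coxeter_number R S a0 - 2)"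
proof -
  interpret normalized_based_root_sys R S
    using assms(1-3) unfolding irreducible_root_system_def
    by unfold_locales (auto simp: based_root_sys_axioms_def)
  have "0 \<notin> R" using root_nonzero by blast
  note w_image = weyl_group_image_roots[OF assms(5)]
  note w_inner = weyl_group_inner[OF \<open>0 \<notin> R\<close> assms(5)]
  note w_coroot = weyl_group_inner_coroot[OF \<open>0 \<notin> R\<close> assms(5)]
  have a0: "short_root R a0" using assms(4) unfolding highest_short_root_def by blast
  have "a0 \<in> w ` R" using w_image a0 short_root_iff by simp
  then obtain z where z: "z \<in> R" "a0 = w z" by blast
  have "short_root R z"
    using a0 z w_inner[of z z] short_root_iff by simp
  then have "w (rho R S) \<bullet> coroot a0 = rho R S \<bullet> z"
    by (simp add: z(2) w_coroot coroot_short_root)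
  then have "w (rho R S) \<bullet> coroot a0 \<ge> - (rho R S \<bullet> a0)"
    using rho_inner_short_root_abs_le[OF assms(4) \<open>short_root R z\<close>] by linarith
  moreover have "w (rho R S) \<bullet> coroot a \<le> rho R S \<bullet> a0" if "a \<in> S" for a
  proof -
    have "a \<in> w ` R" using that simple_root_in w_image by blast
    then obtain y where "y \<in> R" "a = w y" by blast
    then show ?thesis using w_coroot rho_inner_coroot_le[OF assms(1,4)] by simp
  qed
  ultimately show ?thesis
    using rho_inner_coroot_simple
    by (simp add: dot_action_def coxeter_number_def coroot_short_root[OF a0] inner_diff_left)
qed

end
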